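(* Let $T \subseteq R$ and let $b = \pi_T x \in \mathbb{Z}/m\mathbb{Z}$ where $\pi_T = \prod_{i \in T} p_i$ and $x$ is an integer with $\gcd(x, m/g_T) = 1$. Let $e$ be an integer with $e \ge \max(e_1,\dots,e_r)$ and $e \ge 1$. Then $$b^e \equiv \sum_{i \in R\setminus T} d_{R\setminus\{i\}}\; b^{\,e \bmod \varphi(p_i^{e_i})} \pmod{m},$$ where $e \bmod \varphi(p_i^{e_i})$ denotes the least nonnegative residue and $b^0$ is interpreted as $1$ (so that $d_{R\setminus\{i\}} b^0 = d_{R\setminus\{i\}}$).
   Context: Let $m = p_1^{e_1}\cdots p_r^{e_r}$ with $r \ge 1$, distinct primes $p_1,\dots,p_r$ and exponents $e_i \ge 1$, and let $R=\{1,\dots,r\}$. For $I \subseteq R$, $g_I = \prod_{i\in I} p_i^{e_i}$ and $d_I$ denotes the idempotent of $\mathbb{Z}/m\mathbb{Z}$ determined by $I$: the unique residue class modulo $m$ with $d_I \equiv 0 \pmod{p_i^{e_i}}$ for all $i \in I$ and $d_I \equiv 1 \pmod{p_i^{e_i}}$ for all $i \in R\setminus I$. $\varphi$ is Euler's totient function. (An empty sum is $0$.) *)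

theory Defs
  imports "HOL-Number_Theory.Number_Theory"
begin

text \<open>Setting: m = prod of p i ^ ex i over i in {1..r}, distinct primes p i, ex i >= 1.
  The idempotent d_I of Z/mZ is represented by its least nonnegative representative.\<close>

definition modulus :: "(nat \<Rightarrow> nat) \<Rightarrow> (nat \<Rightarrow> nat) \<Rightarrow> nat \<Rightarrow> nat" where
  "modulus p ex r = (\<Prod>i\<in>{1..r}. p i ^ ex i)"

definition idem :: "(nat \<Rightarrow> nat) \<Rightarrow> (nat \<Rightarrow> nat) \<Rightarrow> nat \<Rightarrow> nat set \<Rightarrow> int" where
  "idem p ex r I = (THE d::int. 0 \<le> d \<and> d < int (modulus p ex r) \<and>
      (\<forall>i\<in>I. [d = 0] (mod int (p i ^ ex i))) \<and>
      (\<forall>i\<in>{1..r} - I. [d = 1] (mod int (p i ^ ex i))))"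

end

theory Submission
  imports Defs
begin

text \<open>By the Chinese remainder theorem it suffices to check the congruence modulo each
  \<open>p j ^ ex j\<close>. There \<open>d\<^bsub>R-{i}\<^esub>\<close> is \<open>1\<close> for \<open>i = j\<close> and \<open>0\<close> otherwise, so the sum reduces
  to \<open>b ^ (e mod \<phi>(p j ^ ex j))\<close> if \<open>j \<notin> T\<close> and to \<open>0\<close> if \<open>j \<in> T\<close>. In the first case \<open>b\<close> is
  a unit modulo \<open>p j ^ ex j\<close> and Euler's theorem applies; in the second \<open>p j\<close> divides \<open>b\<close>, and
  \<open>e \<ge> ex j\<close> makes \<open>b ^ e\<close> vanish.\<close>

lemma coprime_power_distinct_primes:
  fixes p :: "'a \<Rightarrow> nat"
  assumes "\<forall>i\<in>A. prime (p i)" and "inj_on p A"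
    and "i \<in> A" and "j \<in> A" and "i \<noteq> j"
  shows "coprime (p i ^ k) (p j ^ l)"
proof -
  have "p i \<noteq> p j"
    using assms(2-5) by (meson inj_on_contraD)
  then have "coprime (p i) (p j)"
    using assms(1,3,4) by (simp add: primes_coprime)
  then show ?thesis by simp
qed

lemma chinese_remainder_unique_int:
  fixes q u :: "'a \<Rightarrow> nat"
  assumes "finite A" and "\<forall>i\<in>A. q i \<noteq> 0"
    and cop: "\<forall>i\<in>A. \<forall>j\<in>A. i \<noteq> j \<longrightarrow> coprime (q i) (q j)"
  shows "\<exists>!d. 0 \<le> d \<and> d < int (\<Prod>i\<in>A. q i) \<and> (\<forall>i\<in>A. [d = int (u i)] (mod int (q i)))"
proof (rule ex_ex1I)
  obtain y where "\<forall>i\<in>A. [y = u i] (mod q i)"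
    using chinese_remainder_nat[OF \<open>finite A\<close> cop] by blast
  moreover have "[y mod (\<Prod>i\<in>A. q i) = y] (mod q i)" if "i \<in> A" for i
    unfolding cong_def using \<open>finite A\<close> that by (intro mod_mod_cancel dvd_prodI)
  ultimately have "\<forall>i\<in>A. [int (y mod (\<Prod>i\<in>A. q i)) = int (u i)] (mod int (q i))"
    unfolding cong_int_iff by (blast intro: cong_trans)
  moreover have "int (y mod (\<Prod>i\<in>A. q i)) < int (\<Prod>i\<in>A. q i)"
    using assms(1,2) by (simp only: of_nat_less_iff) (simp add: prod_pos)
  ultimately show "\<exists>d. 0 \<le> d \<and> d < int (\<Prod>i\<in>A. q i) \<and> (\<forall>i\<in>A. [d = int (u i)] (mod int (q i)))"
    by (intro exI[of _ "int (y mod (\<Prod>i\<in>A. q i))"]) simp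
next
  fix d d'
  assume d: "0 \<le> d \<and> d < int (\<Prod>i\<in>A. q i) \<and> (\<forall>i\<in>A. [d = int (u i)] (mod int (q i)))"
    and d': "0 \<le> d' \<and> d' < int (\<Prod>i\<in>A. q i) \<and> (\<forall>i\<in>A. [d' = int (u i)] (mod int (q i)))"
  then have "\<forall>i\<in>A. [d = d'] (mod int (q i))"
    by (meson cong_sym cong_trans)
  then have "[d = d'] (mod (\<Prod>i\<in>A. int (q i)))"
    by (rule cong_cong_prod_coprime) (simp add: cop)
  with d d' show "d = d'"
    by (intro cong_less_imp_eq_int) auto
qed

lemma idem_cong:
  assumes primes: "\<forall>i\<in>{1..r}. prime (p i)" and inj: "inj_on p {1..r}"
    and "I \<subseteq> {1..r}" and "j \<in> {1..r}"
  shows "[idem p ex r I = (if j \<in> I then 0 else 1)] (mod int (p j ^ ex j))"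
proof -
  define u where "u i = (if i \<in> I then 0 else 1 :: nat)" for i
  define P where "P d \<longleftrightarrow> 0 \<le> d \<and> d < int (\<Prod>i\<in>{1..r}. p i ^ ex i) \<and>
      (\<forall>i\<in>{1..r}. [d = int (u i)] (mod int (p i ^ ex i)))" for d
  have "\<exists>!d. P d"
    unfolding P_def using primes coprime_power_distinct_primes[OF primes inj]
    by (intro chinese_remainder_unique_int) (auto simp: prime_gt_0_nat)
  moreover have "idem p ex r I = (THE d. P d)"
    unfolding idem_def modulus_def P_def u_def using \<open>I \<subseteq> {1..r}\<close>
    by (intro arg_cong[where f = The] ext) (auto simp: Ball_def)
  ultimately have "P (idem p ex r I)"
    using theI' by metis
  then show ?thesis
    using \<open>j \<in> {1..r}\<close> unfolding P_def u_def by (auto split: if_splits)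
qed

lemma sum_idem_complement_cong:
  fixes c :: "nat \<Rightarrow> int"
  assumes primes: "\<forall>i\<in>{1..r}. prime (p i)" and inj: "inj_on p {1..r}"
    and "A \<subseteq> {1..r}" and "j \<in> {1..r}"
  shows "[(\<Sum>i\<in>A. idem p ex r ({1..r} - {i}) * c i) = (if j \<in> A then c j else 0)]
    (mod int (p j ^ ex j))"
proof -
  have "[(\<Sum>i\<in>A. idem p ex r ({1..r} - {i}) * c i) = (\<Sum>i\<in>A. if i = j then c i else 0)]
      (mod int (p j ^ ex j))"
  proof (rule cong_sum)
    fix i assume "i \<in> A"
    with idem_cong[OF primes inj, of "{1..r} - {i}" j] \<open>A \<subseteq> {1..r}\<close> \<open>j \<in> {1..r}\<close>
    have "[idem p ex r ({1..r} - {i}) = (if i = j then 1 else 0)] (mod int (p j ^ ex j))"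
      by auto
    from cong_scalar_right[OF this, of "c i"]
    show "[idem p ex r ({1..r} - {i}) * c i = (if i = j then c i else 0)] (mod int (p j ^ ex j))"
      by (cases "i = j") simp_all
  qed
  moreover have "finite A"
    using \<open>A \<subseteq> {1..r}\<close> finite_subset by blast
  ultimately show ?thesis by simp
qed

lemma euler_theorem_int:
  fixes b :: int
  assumes "coprime b (int n)"
  shows "[b ^ totient n = 1] (mod int n)"
proof (cases "n = 0")
  case True
  then show ?thesis by simp
next
  case False
  define a where "a = nat (b mod int n)"
  have a: "int a = b mod int n"
    using False unfolding a_def by simp
  have "coprime (int a) (int n)"
    unfolding a using assms False by simp
  then have "[a ^ totient n = 1] (mod n)"
    by (intro euler_theorem) simp
  then have "[int a ^ totient n = 1] (mod int n)"
    by (metis cong_int_iff of_nat_1 of_nat_power)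
  moreover have "[b = int a] (mod int n)"
    unfolding a by (simp add: cong_def)
  ultimately show ?thesis
    by (meson cong_pow cong_trans)
qed

lemma power_cong_power_mod_totient:
  fixes b :: int
  assumes "coprime b (int n)"
  shows "[b ^ e = b ^ (e mod totient n)] (mod int n)"
proof -
  have "b ^ e = (b ^ totient n) ^ (e div totient n) * b ^ (e mod totient n)"
    unfolding power_mult [symmetric] power_add [symmetric] by simp
  also have "[\<dots> = 1 ^ (e div totient n) * b ^ (e mod totient n)] (mod int n)"
    using euler_theorem_int[OF assms] by (intro cong_mult cong_pow cong_refl)
  finally show ?thesis by simp
qed

lemma coprime_prod_primes_mult_power:
  fixes p :: "'a \<Rightarrow> nat" and x :: int
  assumes "finite T" and "\<forall>i\<in>T. prime (p i)" and "prime q" and "q \<notin> p ` T"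
    and "\<not> int q dvd x"
  shows "coprime ((\<Prod>i\<in>T. int (p i)) * x) (int q ^ k)"
proof -
  have prime_q: "prime (int q)"
    using \<open>prime q\<close> by simp
  have "\<not> int q dvd (\<Prod>i\<in>T. int (p i))"
  proof
    assume "int q dvd (\<Prod>i\<in>T. int (p i))"
    then obtain i where "i \<in> T" "int q dvd int (p i)"
      using prime_dvd_prod_iff[OF \<open>finite T\<close> prime_q, of "\<lambda>i. int (p i)"] by blast
    then have "q = p i"
      using assms(2,3) primes_dvd_imp_eq by (metis of_nat_dvd_iff)
    with \<open>i \<in> T\<close> \<open>q \<notin> p ` T\<close> show False by blast
  qed
  with \<open>\<not> int q dvd x\<close> have "\<not> int q dvd (\<Prod>i\<in>T. int (p i)) * x"
    using prime_dvd_mult_iff[OF prime_q] by blast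
  with prime_q show ?thesis
    by (rule prime_imp_power_coprime)
qed

lemma prod_div_prod_subset:
  fixes f :: "'a \<Rightarrow> 'b :: semidom_divide"
  assumes "finite B" and "A \<subseteq> B" and "\<forall>i\<in>A. f i \<noteq> 0"
  shows "(\<Prod>i\<in>B. f i) div (\<Prod>i\<in>A. f i) = (\<Prod>i\<in>B - A. f i)"
proof -
  have "(\<Prod>i\<in>A. f i) \<noteq> 0"
    using assms(3) finite_subset[OF assms(2,1)] by simp
  moreover have "(\<Prod>i\<in>B. f i) = (\<Prod>i\<in>B - A. f i) * (\<Prod>i\<in>A. f i)"
    by (rule prod.subset_diff[OF assms(2,1)])
  ultimately show ?thesis by simp
qed

lemma prime_not_dvd_coprime_complement:
  fixes p ex :: "nat \<Rightarrow> nat" and x :: int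
  assumes primes: "\<forall>i\<in>{1..r}. prime (p i)"
    and "T \<subseteq> {1..r}" and "j \<in> {1..r} - T" and "ex j \<ge> 1"
    and "coprime x (int ((\<Prod>i\<in>{1..r}. p i ^ ex i) div (\<Prod>i\<in>T. p i ^ ex i)))"
  shows "\<not> int (p j) dvd x"
proof
  assume "int (p j) dvd x"
  have "(\<Prod>i\<in>{1..r}. p i ^ ex i) div (\<Prod>i\<in>T. p i ^ ex i) = (\<Prod>i\<in>{1..r} - T. p i ^ ex i)"
    using primes \<open>T \<subseteq> {1..r}\<close> by (intro prod_div_prod_subset) (auto simp: prime_gt_0_nat)
  moreover have "p j dvd (\<Prod>i\<in>{1..r} - T. p i ^ ex i)"
    using assms(3,4) by (intro dvd_trans[OF dvd_power[of "ex j" "p j"]] dvd_prodI) auto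
  ultimately have "int (p j) dvd int ((\<Prod>i\<in>{1..r}. p i ^ ex i) div (\<Prod>i\<in>T. p i ^ ex i))"
    by (simp only: of_nat_dvd_iff)
  with assms(5) \<open>int (p j) dvd x\<close> have "is_unit (int (p j))"
    by (rule coprime_common_divisor)
  moreover have "prime (int (p j))"
    using primes \<open>j \<in> {1..r} - T\<close> by simp
  ultimately show False
    by (simp add: not_prime_unit)
qed

lemma coprime_prod_primes_mult_power_complement:
  fixes p ex :: "nat \<Rightarrow> nat" and x :: int
  assumes primes: "\<forall>i\<in>{1..r}. prime (p i)" and inj: "inj_on p {1..r}"
    and "T \<subseteq> {1..r}" and "j \<in> {1..r} - T" and "ex j \<ge> 1"
    and "coprime x (int ((\<Prod>i\<in>{1..r}. p i ^ ex i) div (\<Prod>i\<in>T. p i ^ ex i)))"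
  shows "coprime ((\<Prod>i\<in>T. int (p i)) * x) (int (p j ^ k))"
proof -
  have "p j \<notin> p ` T"
    using assms(3,4) inj by (auto dest: inj_onD)
  moreover have "\<not> int (p j) dvd x"
    using prime_not_dvd_coprime_complement[OF primes assms(3-6)] .
  ultimately show ?thesis
    unfolding of_nat_power using primes assms(3,4) finite_subset[OF assms(3)]
    by (intro coprime_prod_primes_mult_power) auto
qed

lemma power_cong_sum_idem_mod_prime_power:
  fixes p ex :: "nat \<Rightarrow> nat" and x :: int
  assumes primes: "\<forall>i\<in>{1..r}. prime (p i)" and inj: "inj_on p {1..r}"
    and "\<forall>i\<in>{1..r}. ex i \<ge> 1" and "T \<subseteq> {1..r}"
    and coprime_x: "coprime x (int ((\<Prod>i\<in>{1..r}. p i ^ ex i) div (\<Prod>i\<in>T. p i ^ ex i)))"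
    and "\<forall>i\<in>{1..r}. ex i \<le> e" and "j \<in> {1..r}"
  defines "b \<equiv> (\<Prod>i\<in>T. int (p i)) * x"
  shows "[b ^ e = (\<Sum>i\<in>{1..r} - T. idem p ex r ({1..r} - {i}) * b ^ (e mod totient (p i ^ ex i)))]
    (mod int (p j ^ ex j))"
proof -
  define c where "c i = b ^ (e mod totient (p i ^ ex i))" for i
  define S where "S = (\<Sum>i\<in>{1..r} - T. idem p ex r ({1..r} - {i}) * c i)"
  have S_cong: "[S = (if j \<in> T then 0 else c j)] (mod int (p j ^ ex j))"
    unfolding S_def using sum_idem_complement_cong[where A = "{1..r} - T" and ex = ex and c = c,
        OF primes inj Diff_subset \<open>j \<in> {1..r}\<close>] \<open>j \<in> {1..r}\<close> by (cases "j \<in> T") simp_all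
  have "[b ^ e = S] (mod int (p j ^ ex j))"
  proof (cases "j \<in> T")
    case True
    have "int (p j) dvd b"
      unfolding b_def using finite_subset[OF \<open>T \<subseteq> {1..r}\<close>] True by (intro dvd_mult2 dvd_prodI) auto
    then have "[b ^ e = 0] (mod int (p j ^ ex j))"
      using assms(6,7) by (simp add: cong_0_iff dvd_power_le)
    moreover from S_cong True have "[S = 0] (mod int (p j ^ ex j))"
      by simp
    ultimately show ?thesis
      by (rule cong_trans[OF _ cong_sym])
  next
    case False
    with assms(3,7) have "coprime b (int (p j ^ ex j))"
      unfolding b_def
      by (intro coprime_prod_primes_mult_power_complement[OF primes inj assms(4) _ _ coprime_x]) auto
    then have "[b ^ e = c j] (mod int (p j ^ ex j))"
      unfolding c_def by (rule power_cong_power_mod_totient)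
    moreover from S_cong False have "[S = c j] (mod int (p j ^ ex j))"
      by simp
    ultimately show ?thesis
      by (rule cong_trans[OF _ cong_sym])
  qed
  then show ?thesis
    unfolding S_def c_def .
qed

theorem mainTheorem19:
  fixes p ex :: "nat \<Rightarrow> nat" and r m :: nat and T :: "nat set" and x :: int and e :: nat
  assumes "r \<ge> 1"
    and "\<forall>i\<in>{1..r}. prime (p i)"
    and "inj_on p {1..r}"
    and "\<forall>i\<in>{1..r}. ex i \<ge> 1"
    and "m = (\<Prod>i\<in>{1..r}. p i ^ ex i)"
    and "T \<subseteq> {1..r}"
    and "gcd x (int (m div (\<Prod>i\<in>T. p i ^ ex i))) = 1"
    and "\<forall>i\<in>{1..r}. ex i \<le> e"
    and "e \<ge> 1"
  shows "let b = (\<Prod>i\<in>T. int (p i)) * x in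
    [b ^ e = (\<Sum>i\<in>{1..r} - T. idem p ex r ({1..r} - {i}) * b ^ (e mod totient (p i ^ ex i)))] (mod int m)"
proof -
  define b where "b = (\<Prod>i\<in>T. int (p i)) * x"
  have "coprime x (int ((\<Prod>i\<in>{1..r}. p i ^ ex i) div (\<Prod>i\<in>T. p i ^ ex i)))"
    using assms(5,7) by (simp add: coprime_iff_gcd_eq_1)
  then have "\<forall>j\<in>{1..r}. [b ^ e = (\<Sum>i\<in>{1..r} - T. idem p ex r ({1..r} - {i}) * b ^ (e mod totient (p i ^ ex i)))]
      (mod int (p j ^ ex j))"
    unfolding b_def using power_cong_sum_idem_mod_prime_power[OF assms(2-4,6) _ assms(8)] by blast
  then have "[b ^ e = (\<Sum>i\<in>{1..r} - T. idem p ex r ({1..r} - {i}) * b ^ (e mod totient (p i ^ ex i)))]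
      (mod (\<Prod>i\<in>{1..r}. int (p i ^ ex i)))"
    using coprime_power_distinct_primes[OF assms(2,3)]
    by (intro cong_cong_prod_coprime) (auto simp flip: of_nat_power)
  then show ?thesis
    unfolding b_def assms(5) by simp
qed

end
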